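(* Let $p$ be a prime, $\mathbb F=\mathbb F_{p^2}$, $\beta\in\mathbb F$ with $\beta^p-\beta=1$, and in the rational function field $\mathbb F(y)$ put $x=y^p-y$ and $$\delta(y)=\prod_{a=1}^{p-1}\Big(\frac{\beta-(y+a)}{y+a}\Big)^{a}.$$ Then (i) in $\Omega^1_{\mathbb F(y)/\mathbb F}$, $$y^p\frac{dx}{x}-(\beta-y)^p\frac{dx}{1-x}=\frac{d\delta(y)}{\delta(y)};$$ (ii) $\dfrac{\delta(y+1)}{\delta(y)}\equiv\dfrac{x}{1-x}\mod \mathbb F(y)^{\times p}$. *)

theory Defs
  imports "HOL-Computational_Algebra.Polynomial" "HOL-Computational_Algebra.Fraction_Field"
begin

type_synonym 'a ratfun = "'a poly fract"

definition ratfun_of_poly :: "'a::field poly \<Rightarrow> 'a ratfun" where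
  "ratfun_of_poly p = Fract p 1"

definition ratfun_const :: "'a::field \<Rightarrow> 'a ratfun" where
  "ratfun_const c = ratfun_of_poly [:c:]"

definition ratfun_var :: "'a::field ratfun" where
  "ratfun_var = ratfun_of_poly [:0, 1:]"

text \<open>Since Omega^1_{k(y)/k} is free of rank one with basis dy and
  d f = (d/dy f) dy, a differential form g dy is identified with its coefficient g.\<close>
definition ratfun_deriv :: "'a::field ratfun \<Rightarrow> 'a ratfun" where
  "ratfun_deriv q = (THE d. \<forall>a b. b \<noteq> 0 \<longrightarrow> q = Fract a b \<longrightarrow>
       d = Fract (pderiv a * b - a * pderiv b) (b * b))"

definition dlog :: "'a::field ratfun \<Rightarrow> 'a ratfun" where
  "dlog f = ratfun_deriv f / f"

definition delta_fun :: "nat \<Rightarrow> 'a::field \<Rightarrow> 'a ratfun \<Rightarrow> 'a ratfun" where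
  "delta_fun p \<beta> t = (\<Prod>a\<in>{1..p-1}.
      ((ratfun_const \<beta> - (t + of_nat a)) / (t + of_nat a)) ^ a)"

end

(* Over the prime field the polynomial X^p - X splits into the linear factors X - a, and its
   derivative is -1. Hence for w outside the prime field the logarithmic derivative gives
   sum_a 1/(w - a) = -1/(w^p - w), and so sum_a a/(w - a) = -w/(w^p - w).

   Put z = beta - y. Since beta^p - beta = 1 we have z^p - z = 1 - x, and dx = -dy, so the left
   side of (i) is z/(z^p - z) - y/(y^p - y). On the other hand
   dlog delta = sum_{a=1}^{p-1} a (dz/(z - a) - dy/(y + a)); adding the vanishing term a = p turns
   both sums into sums over the whole prime field, which give exactly that expression.

   For (ii) let f(a) = (z - a)/(y + a), so that delta(y) = prod_{a=1}^{p-1} f(a)^a and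
   delta(y + 1) = prod_{a=1}^{p-1} f(a + 1)^a. Shifting exponents, delta(y + 1) prod_{a=1}^p f(a) =
   prod_{a=1}^p f(a)^a = delta(y) f(p)^p, where prod_{a=1}^p f(a) = (z^p - z)/(y^p - y) = (1 - x)/x
   and f(p) = z/y. *)

theory Submission
  imports Defs "HOL-Number_Theory.Residues"
begin

section \<open>Prime characteristic\<close>

lemma CHAR_fract [simp]: "CHAR('a::idom fract) = CHAR('a)"
  by (rule CHAR_eqI) (auto simp: of_nat_fract Zero_fract_def eq_fract of_nat_eq_0_iff_char_dvd)

lemma CHAR_eq_prime_of_card_power:
  assumes "prime p" "card (UNIV :: 'a::{idom, finite} set) = p ^ k" "k > 0"
  shows "CHAR('a) = p"
proof -
  have "prime CHAR('a)" by (rule prime_CHAR_semidom) (simp add: finite_imp_CHAR_pos)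
  moreover have "CHAR('a) dvd p ^ k" using CHAR_dvd_CARD[where 'a='a] assms(2) by simp
  ultimately show ?thesis using assms(1) prime_dvd_power primes_dvd_imp_eq by blast
qed

lemma of_nat_power_CHAR:
  assumes "prime CHAR('a::comm_ring_1)"
  shows "(of_nat n :: 'a) ^ CHAR('a) = of_nat n"
proof (induction n)
  case (Suc n)
  have "(of_nat (Suc n) :: 'a) ^ CHAR('a) = of_nat n ^ CHAR('a) + 1 ^ CHAR('a)"
    by (simp add: freshmans_dream assms add.commute)
  then show ?case using Suc by (simp add: add.commute)
qed (use prime_gt_0_nat[OF assms] in \<open>simp add: power_0_left\<close>)

lemma inj_on_of_nat_CHAR: "inj_on (of_nat :: nat \<Rightarrow> 'a::comm_ring_1) {1..CHAR('a)}"
proof (rule inj_onI)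
  fix i j assume ij: "i \<in> {1..CHAR('a)}" "j \<in> {1..CHAR('a)}" and "(of_nat i :: 'a) = of_nat j"
  then have "i mod CHAR('a) = j mod CHAR('a)" by (simp add: of_nat_eq_iff_cong_CHAR cong_def)
  with ij show "i = j" by (auto simp: mod_if split: if_splits)
qed

lemma diff_power_CHAR:
  assumes "prime p" "CHAR('a::comm_ring_1) = p"
  shows "(a - b :: 'a) ^ p = a ^ p - b ^ p"
proof -
  have "(a + - b) ^ p = a ^ p + (- b) ^ p"
    using freshmans_dream[where 'a='a, unfolded assms(2), OF assms(1) refl] .
  then show ?thesis
    by (simp only: minus_power_prime_CHAR[OF assms(2)[symmetric] assms(1)] diff_conv_add_uminus)
qed

section \<open>Splitting of X^n - X\<close>

lemma prod_roots_eq_monom_minus_X: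
  fixes c :: "nat \<Rightarrow> 'a::field"
  assumes "n \<ge> 2" "inj_on c {1..n}" "\<And>b. b \<in> {1..n} \<Longrightarrow> c b ^ n = c b"
  shows "(\<Prod>b\<in>{1..n}. [:- c b, 1:]) = Polynomial.monom 1 n - [:0, 1:]" (is "?Q = ?P")
proof (rule sym, rule poly_eqI_degree_lead_coeff[where n = n and A = "c ` {1..n}"])
  have "degree ?Q = n" by (subst degree_prod_sum_eq) auto
  moreover have "lead_coeff ?Q = 1" by (simp add: lead_coeff_prod)
  ultimately show "Polynomial.coeff ?P n = Polynomial.coeff ?Q n" "degree ?Q \<le> n"
    using assms(1) by (simp_all add: coeff_pCons split: nat.splits)
  show "degree ?P \<le> n"
    using assms(1) by (intro order.trans[OF degree_diff_le_max]) (auto simp: degree_monom_le)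
  show "n \<le> card (c ` {1..n})" using assms(2) by (simp add: card_image)
  fix z assume "z \<in> c ` {1..n}"
  with assms(3) show "poly ?P z = poly ?Q z"
    by (force simp: poly_monom poly_prod intro!: prod_zero)
qed

lemma power_minus_self_eq_prod_roots:
  fixes c :: "nat \<Rightarrow> 'a::field"
  assumes "n \<ge> 2" "inj_on c {1..n}" "\<And>b. b \<in> {1..n} \<Longrightarrow> c b ^ n = c b"
  shows "w ^ n - w = (\<Prod>b\<in>{1..n}. w - c b)"
  using arg_cong[OF prod_roots_eq_monom_minus_X[OF assms], of "\<lambda>q. poly q w"]
  by (simp add: poly_monom poly_prod)

lemma sum_inverse_sub_roots:
  fixes c :: "nat \<Rightarrow> 'a::field"
  assumes "n \<ge> 2" "inj_on c {1..n}" "\<And>b. b \<in> {1..n} \<Longrightarrow> c b ^ n = c b"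
    and "of_nat n = (0 :: 'a)" and "w ^ n \<noteq> w"
  shows "(\<Sum>b\<in>{1..n}. 1 / (w - c b)) = - 1 / (w ^ n - w)"
proof -
  have factor_ne: "w - c b \<noteq> 0" if "b \<in> {1..n}" for b
    using assms(3,5) that by auto
  have "-1 = poly (pderiv (Polynomial.monom 1 n - [:0, 1:])) w"
    using assms(4) by (simp add: pderiv_monom pderiv_diff pderiv_pCons)
  also have "\<dots> = poly (pderiv (\<Prod>b\<in>{1..n}. [:- c b, 1:])) w"
    by (simp only: prod_roots_eq_monom_minus_X[OF assms(1-3)])
  also have "\<dots> = (\<Sum>b\<in>{1..n}. \<Prod>b'\<in>{1..n} - {b}. w - c b')"
    by (simp add: pderiv_prod pderiv_pCons poly_sum poly_prod)
  also have "\<dots> = (w ^ n - w) * (\<Sum>b\<in>{1..n}. 1 / (w - c b))"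
    unfolding sum_distrib_left
  proof (rule sum.cong[OF refl])
    fix b assume b: "b \<in> {1..n}"
    have "w ^ n - w = (\<Prod>b'\<in>{1..n}. w - c b')"
      by (rule power_minus_self_eq_prod_roots[OF assms(1-3)])
    also have "\<dots> = (w - c b) * (\<Prod>b'\<in>{1..n} - {b}. w - c b')"
      by (rule prod.remove) (use b in auto)
    finally show "(\<Prod>b'\<in>{1..n} - {b}. w - c b') = (w ^ n - w) * (1 / (w - c b))"
      using factor_ne[OF b] by simp
  qed
  finally show ?thesis using assms(5) by (simp add: field_simps)
qed

lemma sum_root_div_sub_roots:
  fixes c :: "nat \<Rightarrow> 'a::field"
  assumes "n \<ge> 2" "inj_on c {1..n}" "\<And>b. b \<in> {1..n} \<Longrightarrow> c b ^ n = c b"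
    and "of_nat n = (0 :: 'a)" and "w ^ n \<noteq> w"
  shows "(\<Sum>b\<in>{1..n}. c b / (w - c b)) = - w / (w ^ n - w)"
proof -
  have "w \<noteq> c b" if "b \<in> {1..n}" for b
    using assms(3,5) that by auto
  then have "(\<Sum>b\<in>{1..n}. c b / (w - c b)) = (\<Sum>b\<in>{1..n}. w * (1 / (w - c b)) - 1)"
    by (intro sum.cong) (auto simp: field_simps)
  also have "\<dots> = w * (\<Sum>b\<in>{1..n}. 1 / (w - c b)) - of_nat n"
    by (simp only: sum_subtractf sum_distrib_left) simp
  also have "\<dots> = - w / (w ^ n - w)"
    using sum_inverse_sub_roots[OF assms] assms(4) by simp
  finally show ?thesis .
qed

lemma of_nat_roots_CHAR:
  assumes "prime p" "CHAR('a::field) = p"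
  shows "inj_on (of_nat :: nat \<Rightarrow> 'a) {1..p}" "(of_nat b :: 'a) ^ p = of_nat b"
    and "inj_on (\<lambda>b. - of_nat b :: 'a) {1..p}" "(- of_nat b :: 'a) ^ p = - of_nat b"
proof -
  show inj: "inj_on (of_nat :: nat \<Rightarrow> 'a) {1..p}"
    using inj_on_of_nat_CHAR[where 'a='a] unfolding assms(2) .
  show pow: "(of_nat b :: 'a) ^ p = of_nat b"
    by (rule of_nat_power_CHAR[where 'a='a, unfolded assms(2), OF assms(1)])
  show "(- of_nat b :: 'a) ^ p = - of_nat b"
    by (simp only: minus_power_prime_CHAR[OF assms(2)[symmetric] assms(1)] pow)
  show "inj_on (\<lambda>b. - of_nat b :: 'a) {1..p}"
    using inj unfolding inj_on_def by (metis neg_equal_iff_equal)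
qed

lemma power_CHAR_minus_self_eq_prod:
  fixes w :: "'a::field"
  assumes "prime p" "CHAR('a) = p"
  shows "w ^ p - w = (\<Prod>b\<in>{1..p}. w - of_nat b)"
    and "w ^ p - w = (\<Prod>b\<in>{1..p}. w + of_nat b)"
proof -
  have "p \<ge> 2" using assms(1) by (rule prime_ge_2_nat)
  note roots = of_nat_roots_CHAR[OF assms]
  show "w ^ p - w = (\<Prod>b\<in>{1..p}. w - of_nat b)"
    by (rule power_minus_self_eq_prod_roots) (use \<open>p \<ge> 2\<close> roots in auto)
  have "w ^ p - w = (\<Prod>b\<in>{1..p}. w - - of_nat b)"
    by (rule power_minus_self_eq_prod_roots) (use \<open>p \<ge> 2\<close> roots in auto)
  then show "w ^ p - w = (\<Prod>b\<in>{1..p}. w + of_nat b)" by simp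
qed

lemma power_CHAR_eq_self_iff:
  fixes w :: "'a::field"
  assumes "prime p" "CHAR('a) = p"
  shows "w ^ p = w \<longleftrightarrow> (\<exists>b\<in>{1..p}. w = of_nat b)"
  using power_CHAR_minus_self_eq_prod(1)[OF assms, of w] of_nat_roots_CHAR(2)[OF assms]
  by (auto simp: prod_zero_iff)

lemma sum_of_nat_div_CHAR:
  fixes w :: "'a::field"
  assumes "prime p" "CHAR('a) = p" "w ^ p \<noteq> w"
  shows "(\<Sum>b\<in>{1..p}. of_nat b / (w - of_nat b)) = - w / (w ^ p - w)"
    and "(\<Sum>b\<in>{1..p}. of_nat b / (w + of_nat b)) = w / (w ^ p - w)"
proof -
  have "p \<ge> 2" using assms(1) by (rule prime_ge_2_nat)
  have "of_nat p = (0 :: 'a)" using of_nat_CHAR[where 'a='a] assms(2) by simp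
  note roots = of_nat_roots_CHAR[OF assms(1,2)]
  show "(\<Sum>b\<in>{1..p}. of_nat b / (w - of_nat b)) = - w / (w ^ p - w)"
    by (rule sum_root_div_sub_roots)
      (use \<open>p \<ge> 2\<close> \<open>of_nat p = 0\<close> roots assms(3) in auto)
  have "(\<Sum>b\<in>{1..p}. - of_nat b / (w - - of_nat b)) = - w / (w ^ p - w)"
    by (rule sum_root_div_sub_roots)
      (use \<open>p \<ge> 2\<close> \<open>of_nat p = 0\<close> roots assms(3) in auto)
  then show "(\<Sum>b\<in>{1..p}. of_nat b / (w + of_nat b)) = w / (w ^ p - w)"
    by (simp add: sum_negf)
qed

section \<open>Rational functions, derivation and logarithmic differentials\<close>

lemma ratfun_const_zero: "ratfun_const 0 = (0 :: 'a::field ratfun)"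
  by (simp add: ratfun_const_def ratfun_of_poly_def Zero_fract_def)

lemma ratfun_const_one: "ratfun_const 1 = (1 :: 'a::field ratfun)"
  by (simp add: ratfun_const_def ratfun_of_poly_def One_fract_def flip: one_pCons)

lemma ratfun_const_of_nat: "ratfun_const (of_nat n) = (of_nat n :: 'a::field ratfun)"
  by (simp add: ratfun_const_def ratfun_of_poly_def of_nat_fract of_nat_poly)

lemma ratfun_const_diff: "ratfun_const (a - b) = ratfun_const a - (ratfun_const b :: 'a::field ratfun)"
  by (simp add: ratfun_const_def ratfun_of_poly_def)

lemma ratfun_const_uminus: "ratfun_const (- a) = - (ratfun_const a :: 'a::field ratfun)"
  using ratfun_const_diff[of 0 a] by (simp add: ratfun_const_zero)

lemma ratfun_const_mult: "ratfun_const (a * b) = ratfun_const a * (ratfun_const b :: 'a::field ratfun)"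
  by (simp add: ratfun_const_def ratfun_of_poly_def mult.commute)

lemma ratfun_const_power: "ratfun_const (a ^ n) = (ratfun_const a :: 'a::field ratfun) ^ n"
  by (induction n) (simp_all add: ratfun_const_mult ratfun_const_one)

lemma ratfun_var_ne_const: "ratfun_var \<noteq> (ratfun_const c :: 'a::field ratfun)"
  by (simp add: ratfun_var_def ratfun_const_def ratfun_of_poly_def eq_fract)

lemma ratfun_translate_var_ne_zero:
  shows "ratfun_var + of_nat a \<noteq> (0 :: 'a::field ratfun)"
    and "ratfun_const \<beta> - ratfun_var - of_nat a \<noteq> (0 :: 'a ratfun)"
proof -
  show "ratfun_var + of_nat a \<noteq> (0 :: 'a ratfun)"
  proof
    assume "ratfun_var + of_nat a = (0 :: 'a ratfun)"
    then have "ratfun_var = (- of_nat a :: 'a ratfun)"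
      by (simp add: eq_neg_iff_add_eq_0)
    also have "\<dots> = ratfun_const (- of_nat a)"
      by (simp add: ratfun_const_uminus ratfun_const_of_nat)
    finally show False using ratfun_var_ne_const by blast
  qed
  show "ratfun_const \<beta> - ratfun_var - of_nat a \<noteq> (0 :: 'a ratfun)"
  proof
    assume "ratfun_const \<beta> - ratfun_var - of_nat a = (0 :: 'a ratfun)"
    then have "ratfun_var = ratfun_const \<beta> - (of_nat a :: 'a ratfun)"
      by (simp add: algebra_simps)
    also have "\<dots> = ratfun_const (\<beta> - of_nat a)"
      by (simp add: ratfun_const_diff ratfun_const_of_nat)
    finally show False using ratfun_var_ne_const by blast
  qed
qed

lemma ratfun_var_power_CHAR_ne:
  fixes \<beta> :: "'a::field"
  assumes "prime p" "CHAR('a) = p"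
  shows "ratfun_var ^ p \<noteq> (ratfun_var :: 'a ratfun)"
    and "(ratfun_const \<beta> - ratfun_var) ^ p \<noteq> (ratfun_const \<beta> - ratfun_var :: 'a ratfun)"
proof -
  have char: "CHAR('a ratfun) = p" using assms(2) by simp
  show "ratfun_var ^ p \<noteq> (ratfun_var :: 'a ratfun)"
    using ratfun_var_ne_const[of "of_nat b" for b]
    by (auto simp: power_CHAR_eq_self_iff[OF assms(1) char] ratfun_const_of_nat)
  show "(ratfun_const \<beta> - ratfun_var) ^ p \<noteq> (ratfun_const \<beta> - ratfun_var :: 'a ratfun)"
    using ratfun_translate_var_ne_zero(2)[of \<beta>]
    by (auto simp: power_CHAR_eq_self_iff[OF assms(1) char])
qed

lemma ratfun_deriv_Fract:
  fixes a b :: "'a::field poly"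
  assumes "b \<noteq> 0"
  shows "ratfun_deriv (Fract a b) = Fract (pderiv a * b - a * pderiv b) (b * b)"
  unfolding ratfun_deriv_def
proof (rule the_equality)
  show "\<forall>a' b'. b' \<noteq> 0 \<longrightarrow> Fract a b = Fract a' b' \<longrightarrow>
      Fract (pderiv a * b - a * pderiv b) (b * b) = Fract (pderiv a' * b' - a' * pderiv b') (b' * b')"
  proof (intro allI impI)
    fix a' b' :: "'a poly"
    assume b': "b' \<noteq> 0" and "Fract a b = Fract a' b'"
    then have cross: "a * b' = a' * b" using assms by (simp add: eq_fract)
    then have cross': "pderiv a * b' + a * pderiv b' = pderiv a' * b + a' * pderiv b"
      by (metis pderiv_mult mult.commute)
    have "(pderiv a * b - a * pderiv b) * (b' * b') - (pderiv a' * b' - a' * pderiv b') * (b * b)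
        = b * b' * ((pderiv a * b' + a * pderiv b') - (pderiv a' * b + a' * pderiv b))
          - (pderiv b * b' + pderiv b' * b) * (a * b' - a' * b)"
      by (simp add: algebra_simps)
    then have "(pderiv a * b - a * pderiv b) * (b' * b') = (pderiv a' * b' - a' * pderiv b') * (b * b)"
      by (simp add: cross cross')
    then show "Fract (pderiv a * b - a * pderiv b) (b * b)
        = Fract (pderiv a' * b' - a' * pderiv b') (b' * b')"
      using assms b' by (simp add: eq_fract)
  qed
qed (use assms in blast)

lemma ratfun_deriv_add: "ratfun_deriv (f + g :: 'a::field ratfun) = ratfun_deriv f + ratfun_deriv g"
  by (cases f, cases g) (simp add: ratfun_deriv_Fract eq_fract pderiv_add pderiv_mult algebra_simps)

lemma ratfun_deriv_mult:
  "ratfun_deriv (f * g :: 'a::field ratfun) = ratfun_deriv f * g + f * ratfun_deriv g"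
  by (cases f, cases g) (simp add: ratfun_deriv_Fract eq_fract pderiv_add pderiv_mult algebra_simps)

lemma ratfun_deriv_const [simp]: "ratfun_deriv (ratfun_const c) = 0"
  by (simp add: ratfun_const_def ratfun_of_poly_def ratfun_deriv_Fract pderiv_pCons Zero_fract_def eq_fract)

lemma ratfun_deriv_var [simp]: "ratfun_deriv (ratfun_var :: 'a::field ratfun) = 1"
  by (simp add: ratfun_var_def ratfun_of_poly_def ratfun_deriv_Fract pderiv_pCons One_fract_def eq_fract)

lemma ratfun_deriv_of_nat [simp]: "ratfun_deriv (of_nat n :: 'a::field ratfun) = 0"
  by (metis ratfun_const_of_nat ratfun_deriv_const)

lemma ratfun_deriv_one [simp]: "ratfun_deriv (1 :: 'a::field ratfun) = 0"
  using ratfun_deriv_of_nat[of 1] by simp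

lemma ratfun_deriv_diff: "ratfun_deriv (f - g :: 'a::field ratfun) = ratfun_deriv f - ratfun_deriv g"
  using ratfun_deriv_add[of "f - g" g] by simp

lemma ratfun_deriv_power:
  "ratfun_deriv (f ^ n :: 'a::field ratfun) = of_nat n * f ^ (n - 1) * ratfun_deriv f"
  by (induction n) (auto simp: ratfun_deriv_mult algebra_simps power_eq_if)

lemma dlog_mult:
  "f \<noteq> 0 \<Longrightarrow> g \<noteq> 0 \<Longrightarrow> dlog (f * g :: 'a::field ratfun) = dlog f + dlog g"
  by (simp add: dlog_def ratfun_deriv_mult field_simps)

lemma dlog_divide:
  assumes "f \<noteq> 0" "g \<noteq> (0 :: 'a::field ratfun)"
  shows "dlog (f / g) = dlog f - dlog g"
  using dlog_mult[of "f / g" g] assms by simp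

lemma dlog_power: "f \<noteq> 0 \<Longrightarrow> dlog (f ^ n :: 'a::field ratfun) = of_nat n * dlog f"
  by (induction n) (simp_all add: dlog_def dlog_mult ratfun_deriv_mult field_simps)

lemma dlog_prod:
  "finite A \<Longrightarrow> (\<And>a. a \<in> A \<Longrightarrow> f a \<noteq> 0) \<Longrightarrow>
    dlog (\<Prod>a\<in>A. f a :: 'a::field ratfun) = (\<Sum>a\<in>A. dlog (f a))"
  by (induction A rule: finite_induct) (simp_all add: dlog_mult dlog_def[of 1])

section \<open>The function delta\<close>

lemma dlog_delta_fun:
  fixes \<beta> :: "'a::field"
  assumes "prime p" "CHAR('a) = p"
  defines "y \<equiv> ratfun_var :: 'a ratfun"
  defines "z \<equiv> ratfun_const \<beta> - y"
  shows "dlog (delta_fun p \<beta> y) = z / (z ^ p - z) - y / (y ^ p - y)"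
proof -
  have char: "CHAR('a ratfun) = p" using assms(2) by simp
  have y_ne: "y + of_nat a \<noteq> 0" and z_ne: "z - of_nat a \<noteq> 0" for a
    using ratfun_translate_var_ne_zero by (simp_all add: y_def z_def)
  have factor: "ratfun_const \<beta> - (y + of_nat a) = z - of_nat a" for a
    by (simp add: z_def)
  define T where "T a = - (of_nat a / (z - of_nat a)) - of_nat a / (y + of_nat a)" for a
  have dlog_z: "dlog (z - of_nat a) = - 1 / (z - of_nat a)" for a
    by (simp add: dlog_def z_def y_def ratfun_deriv_diff)
  have dlog_y: "dlog (y + of_nat a) = 1 / (y + of_nat a)" for a
    by (simp add: dlog_def y_def ratfun_deriv_add)
  have dlog_factor: "dlog (((z - of_nat a) / (y + of_nat a)) ^ a) = T a" for a
  proof -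
    have "dlog (((z - of_nat a) / (y + of_nat a)) ^ a)
        = of_nat a * (dlog (z - of_nat a) - dlog (y + of_nat a))"
      using y_ne[of a] z_ne[of a] by (simp add: dlog_power dlog_divide)
    then show ?thesis by (simp add: dlog_z dlog_y T_def algebra_simps)
  qed
  have "dlog (delta_fun p \<beta> y) = (\<Sum>a\<in>{1..p-1}. T a)"
    unfolding delta_fun_def factor using y_ne z_ne
    by (simp add: dlog_prod dlog_factor)
  also have "\<dots> = (\<Sum>a\<in>{1..p}. T a)"
  proof -
    have "{1..p} = insert p {1..p-1}" "p \<notin> {1..p-1}"
      using prime_gt_0_nat[OF assms(1)] by auto
    moreover have "T p = 0"
      using of_nat_CHAR[where 'a="'a ratfun", unfolded char] by (simp add: T_def)
    ultimately show ?thesis by simp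
  qed
  also have "\<dots> = - (\<Sum>a\<in>{1..p}. of_nat a / (z - of_nat a))
      - (\<Sum>a\<in>{1..p}. of_nat a / (y + of_nat a))"
    by (simp add: T_def sum_subtractf sum_negf)
  also have "\<dots> = z / (z ^ p - z) - y / (y ^ p - y)"
  proof -
    have "y ^ p \<noteq> y" "z ^ p \<noteq> z"
      unfolding z_def y_def by (rule ratfun_var_power_CHAR_ne[OF assms(1,2)])+
    then show ?thesis
      by (simp only: sum_of_nat_div_CHAR(1)[OF assms(1) char \<open>z ^ p \<noteq> z\<close>]
          sum_of_nat_div_CHAR(2)[OF assms(1) char \<open>y ^ p \<noteq> y\<close>]) simp
  qed
  finally show ?thesis .
qed

lemma prod_power_shift_telescope:
  fixes g :: "nat \<Rightarrow> 'a::comm_monoid_mult"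
  shows "(\<Prod>a\<in>{1..n}. g (Suc a) ^ a) * (\<Prod>b\<in>{1..Suc n}. g b)
    = (\<Prod>b\<in>{1..Suc n}. g b ^ b)"
proof (induction n)
  case (Suc n)
  have "(\<Prod>a\<in>{1..Suc n}. g (Suc a) ^ a) * (\<Prod>b\<in>{1..Suc (Suc n)}. g b)
      = ((\<Prod>a\<in>{1..n}. g (Suc a) ^ a) * (\<Prod>b\<in>{1..Suc n}. g b))
        * (g (Suc (Suc n)) ^ Suc n * g (Suc (Suc n)))"
    by (simp add: prod.cl_ivl_Suc mult_ac)
  also have "\<dots> = (\<Prod>b\<in>{1..Suc (Suc n)}. g b ^ b)"
    using Suc by (simp add: prod.cl_ivl_Suc mult_ac)
  finally show ?case .
qed simp

lemma delta_fun_shift: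
  fixes \<beta> :: "'a::field"
  assumes "prime p" "CHAR('a) = p"
  defines "y \<equiv> ratfun_var :: 'a ratfun"
  defines "z \<equiv> ratfun_const \<beta> - y"
  shows "delta_fun p \<beta> (y + 1) / delta_fun p \<beta> y = ((y ^ p - y) / (z ^ p - z)) * (z / y) ^ p"
proof -
  have char: "CHAR('a ratfun) = p" using assms(2) by simp
  define f where "f a = (z - of_nat a) / (y + of_nat a)" for a
  have f_ne: "f a \<noteq> 0" for a
    using ratfun_translate_var_ne_zero by (auto simp: f_def y_def z_def)
  have delta: "delta_fun p \<beta> y = (\<Prod>a\<in>{1..p-1}. f a ^ a)"
    unfolding delta_fun_def f_def z_def by (simp add: algebra_simps)
  have delta_shift: "delta_fun p \<beta> (y + 1) = (\<Prod>a\<in>{1..p-1}. f (Suc a) ^ a)"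
    unfolding delta_fun_def f_def z_def by (simp add: algebra_simps)
  have p: "Suc (p - 1) = p" "{1..p} = insert p {1..p-1}" "p \<notin> {1..p-1}"
    using prime_gt_0_nat[OF assms(1)] by auto
  have "(\<Prod>b\<in>{1..p}. f b) = (z ^ p - z) / (y ^ p - y)"
    unfolding f_def prod_dividef power_CHAR_minus_self_eq_prod(1)[OF assms(1) char, of z]
      power_CHAR_minus_self_eq_prod(2)[OF assms(1) char, of y] ..
  moreover have "(\<Prod>b\<in>{1..p}. f b ^ b) = delta_fun p \<beta> y * (z / y) ^ p"
  proof -
    have "f p = z / y"
      using of_nat_CHAR[where 'a="'a ratfun", unfolded char] by (simp add: f_def)
    then show ?thesis
      unfolding delta p(2) using p(3) by (simp add: mult.commute)
  qed
  ultimately have "delta_fun p \<beta> (y + 1) * ((z ^ p - z) / (y ^ p - y))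
      = delta_fun p \<beta> y * (z / y) ^ p"
    using prod_power_shift_telescope[of f "p - 1"] unfolding delta_shift p(1) by simp
  moreover have "delta_fun p \<beta> y \<noteq> 0"
    unfolding delta using f_ne by simp
  moreover have "z ^ p - z \<noteq> 0" "y ^ p - y \<noteq> 0"
    using ratfun_var_power_CHAR_ne[OF assms(1,2)] by (simp_all add: y_def z_def)
  moreover have "y \<noteq> 0"
    using ratfun_translate_var_ne_zero(1)[of 0] by (simp add: y_def)
  ultimately show ?thesis by (simp add: field_simps)
qed

lemma artin_schreier_const_minus_var:
  fixes \<beta> :: "'a::field"
  assumes "prime p" "CHAR('a) = p" "\<beta> ^ p - \<beta> = 1"
  defines "y \<equiv> ratfun_var :: 'a ratfun"
  defines "z \<equiv> ratfun_const \<beta> - y"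
  shows "z ^ p - z = 1 - (y ^ p - y)"
proof -
  have char: "CHAR('a ratfun) = p" using assms(2) by simp
  have "z ^ p - z = ratfun_const (\<beta> ^ p - \<beta>) - (y ^ p - y)"
    unfolding z_def diff_power_CHAR[OF assms(1) char] by (simp add: ratfun_const_diff ratfun_const_power)
  then show ?thesis by (simp add: assms(3) ratfun_const_one)
qed

lemma log_form_eq_dlog_delta_fun:
  fixes \<beta> :: "'a::field"
  assumes "prime p" "CHAR('a) = p" "\<beta> ^ p - \<beta> = 1"
  defines "y \<equiv> ratfun_var :: 'a ratfun"
  defines "x \<equiv> y ^ p - y"
  shows "y ^ p * (ratfun_deriv x / x) - (ratfun_const \<beta> - y) ^ p * (ratfun_deriv x / (1 - x))
    = dlog (delta_fun p \<beta> y)"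
proof -
  define z where "z = ratfun_const \<beta> - y"
  have one_minus_x: "1 - x = z ^ p - z"
    using artin_schreier_const_minus_var[OF assms(1-3)] by (simp add: x_def y_def z_def)
  have deriv_x: "ratfun_deriv x = - 1"
    using of_nat_CHAR[where 'a="'a ratfun"] assms(2)
    by (simp add: x_def y_def ratfun_deriv_diff ratfun_deriv_power)
  have "x \<noteq> 0"
    unfolding x_def y_def using ratfun_var_power_CHAR_ne(1)[OF assms(1,2)] by simp
  have "1 - x \<noteq> 0"
    unfolding one_minus_x z_def y_def using ratfun_var_power_CHAR_ne(2)[OF assms(1,2)] by simp
  have "y ^ p * (ratfun_deriv x / x) - (ratfun_const \<beta> - y) ^ p * (ratfun_deriv x / (1 - x))
      = ((1 - x) + z) / (1 - x) - (x + y) / x"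
    unfolding deriv_x z_def[symmetric] using one_minus_x by (simp add: x_def)
  also have "\<dots> = z / (1 - x) - y / x"
    using \<open>x \<noteq> 0\<close> \<open>1 - x \<noteq> 0\<close> by (simp add: add_divide_distrib)
  also have "\<dots> = z / (z ^ p - z) - y / (y ^ p - y)"
    unfolding one_minus_x unfolding x_def ..
  also have "\<dots> = dlog (delta_fun p \<beta> y)"
    using dlog_delta_fun[OF assms(1,2), of \<beta>] unfolding y_def z_def ..
  finally show ?thesis .
qed

theorem mainTheorem12:
  fixes p :: nat and \<beta> :: "'a::{field, finite}"
  assumes "prime p"
    and "card (UNIV :: 'a set) = p ^ 2"
    and "\<beta> ^ p - \<beta> = 1"
  defines "y \<equiv> (ratfun_var :: 'a ratfun)"
  defines "x \<equiv> y ^ p - y"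
  shows "y ^ p * (ratfun_deriv x / x)
           - (ratfun_const \<beta> - y) ^ p * (ratfun_deriv x / (1 - x))
         = dlog (delta_fun p \<beta> y)
         \<and> (\<exists>r :: 'a ratfun. r \<noteq> 0 \<and>
           delta_fun p \<beta> (y + 1) / delta_fun p \<beta> y = (x / (1 - x)) * r ^ p)"
proof -
  have char: "CHAR('a) = p"
    using CHAR_eq_prime_of_card_power[OF assms(1,2)] by simp
  define z where "z = ratfun_const \<beta> - y"
  have "delta_fun p \<beta> (y + 1) / delta_fun p \<beta> y = (x / (1 - x)) * (z / y) ^ p"
    using delta_fun_shift[OF assms(1) char, of \<beta>]
      artin_schreier_const_minus_var[OF assms(1) char assms(3)]
    unfolding y_def[symmetric] z_def[symmetric] x_def[symmetric] by simp
  moreover have "z / y \<noteq> 0"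
    using ratfun_translate_var_ne_zero(1)[of 0] ratfun_translate_var_ne_zero(2)[of \<beta> 0]
    by (simp add: z_def y_def)
  ultimately show ?thesis
    using log_form_eq_dlog_delta_fun[OF assms(1) char assms(3)] unfolding y_def x_def by blast
qed

end
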